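(* Under the standing assumptions, let $\{x_i\}_{i=1}^N$ be a solution of the delayed Hegselmann–Krause system. Then for all $i,j=1,\dots,N$, every unit vector $v\in\mathbb{R}^d$ and every $n\in\mathbb{N}_0$, $$\langle x_i(t)-x_j(t),v\rangle\le e^{-K(t-t_0)}\langle x_i(t_0)-x_j(t_0),v\rangle+\big(1-e^{-K(t-t_0)}\big)D_n\qquad\text{for all }t\ge t_0\ge n\bar\tau.$$ Moreover, for every $n\in\mathbb{N}_0$, $$D_{n+1}\le e^{-K\bar\tau}d(n\bar\tau)+\big(1-e^{-K\bar\tau}\big)D_n.$$
   Context: Standing assumptions: $N\ge 2$, $d\ge 1$, $\bar\tau>0$; $\tau:[0,\infty)\to[0,\bar\tau]$ continuous; $\psi:\mathbb{R}^d\times\mathbb{R}^d\to\mathbb{R}$ continuous, bounded and strictly positive, $K:=\|\psi\|_\infty$; initial data $x_i^0:[-\bar\tau,0]\to\mathbb{R}^d$ continuous. The delayed Hegselmann–Krause system is $$\frac{d}{dt}x_i(t)=\frac{1}{N-1}\sum_{j\ne i}\psi\big(x_i(t),x_j(t-\tau(t))\big)\big(x_j(t-\tau(t))-x_i(t)\big),\quad t>0,$$ with $x_i=x_i^0$ on $[-\bar\tau,0]$; a solution means continuous $x_i:[-\bar\tau,\infty)\to\mathbb{R}^d$, differentiable on $(0,\infty)$, satisfying this. $d(t):=\max_{i,j}|x_i(t)-x_j(t)|$. For $n\in\mathbb{N}_0$, $D_n:=\max_{i,j=1,\dots,N}\max_{s,t\in[n\bar\tau-\bar\tau,\,n\bar\tau]}|x_i(s)-x_j(t)|$.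 *)

theory Defs
  imports "HOL-Analysis.Analysis"
begin

definition hk_K :: "('a \<Rightarrow> 'a \<Rightarrow> real) \<Rightarrow> real" where
  "hk_K psi = (SUP p. \<bar>psi (fst p) (snd p)\<bar>)"

definition hk_solution ::
  "nat \<Rightarrow> real \<Rightarrow> (real \<Rightarrow> real) \<Rightarrow> ('a::real_normed_vector \<Rightarrow> 'a \<Rightarrow> real)
   \<Rightarrow> (nat \<Rightarrow> real \<Rightarrow> 'a) \<Rightarrow> (nat \<Rightarrow> real \<Rightarrow> 'a) \<Rightarrow> bool" where
  "hk_solution N taubar tau psi x0 x \<longleftrightarrow>
     (\<forall>i\<in>{1..N}.
        continuous_on {-taubar..} (x i) \<and>
        (\<forall>t\<in>{-taubar..0}. x i t = x0 i t) \<and>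
        (\<forall>t>0. (x i has_vector_derivative
            ((1 / (real N - 1)) *\<^sub>R
              (\<Sum>j\<in>{1..N}-{i}. psi (x i t) (x j (t - tau t)) *\<^sub>R (x j (t - tau t) - x i t))))
            (at t)))"

definition hk_diam :: "nat \<Rightarrow> (nat \<Rightarrow> real \<Rightarrow> 'a::real_normed_vector) \<Rightarrow> real \<Rightarrow> real" where
  "hk_diam N x t = Max {norm (x i t - x j t) | i j. i \<in> {1..N} \<and> j \<in> {1..N}}"

text \<open>D_n (the maximum is attained by continuity; we write it as a supremum).\<close>
definition hk_D :: "nat \<Rightarrow> real \<Rightarrow> (nat \<Rightarrow> real \<Rightarrow> 'a::real_normed_vector) \<Rightarrow> nat \<Rightarrow> real" where
  "hk_D N taubar x n = Sup {norm (x i s - x j t) | i j s t.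
      i \<in> {1..N} \<and> j \<in> {1..N} \<and>
      s \<in> {real n * taubar - taubar .. real n * taubar} \<and>
      t \<in> {real n * taubar - taubar .. real n * taubar}}"

end

theory Submission imports Defs begin

text \<open>Along any unit direction v, the largest projection \<open>\<langle>x\<^sub>k, v\<rangle>\<close> over the time window
  defining \<open>D\<^sub>n\<close> is never exceeded later: at a first crossing time all delayed states
  lie below the level, so the dynamics pull the crossing agent back down. Knowing that every
  agent (present or delayed) stays below a level M, each projection satisfies
  \<open>y' \<le> K (M - y)\<close>, hence relaxes exponentially towards M. Applying this to v and to -v with
  levels M and \<open>D\<^sub>n - M\<close> and adding gives the contraction estimate; choosing v along
  \<open>x\<^sub>i(s) - x\<^sub>j(t)\<close> for s, t in the next window gives the recursion for \<open>D\<^sub>n\<close>.\<close>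

lemma exp_scaled_gap_mono:
  fixes y y' :: "real \<Rightarrow> real" and a b K c :: real
  assumes "a \<le> b" and "continuous_on {a..b} y"
    and der: "\<And>t. a < t \<Longrightarrow> t < b \<Longrightarrow> (y has_real_derivative y' t) (at t)"
    and est: "\<And>t. a < t \<Longrightarrow> t < b \<Longrightarrow> y' t \<le> K * (c - y t)"
  shows "exp (K * a) * (c - y a) \<le> exp (K * b) * (c - y b)"
proof (rule DERIV_nonneg_imp_increasing_open[OF \<open>a \<le> b\<close>])
  fix t assume t: "a < t" "t < b"
  have "((\<lambda>t. exp (K * t) * (c - y t)) has_real_derivative
          exp (K * t) * K * (c - y t) + exp (K * t) * (- y' t)) (at t)"
    by (rule derivative_eq_intros der[OF t] refl | simp)+
  moreover have "exp (K * t) * K * (c - y t) + exp (K * t) * (- y' t)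
      = exp (K * t) * (K * (c - y t) - y' t)"
    by (simp add: algebra_simps)
  moreover have "0 \<le> exp (K * t) * (K * (c - y t) - y' t)"
    using est[OF t] by simp
  ultimately show "\<exists>z. ((\<lambda>t. exp (K * t) * (c - y t)) has_real_derivative z) (at t) \<and> 0 \<le> z"
    by auto
qed (intro continuous_intros assms)

lemma linear_relaxation_bound:
  fixes y y' :: "real \<Rightarrow> real" and a b K c :: real
  assumes "a \<le> b" and "continuous_on {a..b} y"
    and "\<And>t. a < t \<Longrightarrow> t < b \<Longrightarrow> (y has_real_derivative y' t) (at t)"
    and "\<And>t. a < t \<Longrightarrow> t < b \<Longrightarrow> y' t \<le> K * (c - y t)"
  shows "y b \<le> exp (- K * (b - a)) * y a + (1 - exp (- K * (b - a))) * c"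
proof -
  have "exp (- K * b) * (exp (K * a) * (c - y a)) \<le> exp (- K * b) * (exp (K * b) * (c - y b))"
    using exp_scaled_gap_mono[OF assms] by (intro mult_left_mono) auto
  moreover have "exp (- K * b) * exp (K * a) = exp (- K * (b - a))"
    by (simp add: exp_add[symmetric] algebra_simps)
  moreover have "exp (- K * b) * exp (K * b) = 1"
    by (simp add: exp_add[symmetric])
  ultimately have "exp (- K * (b - a)) * (c - y a) \<le> c - y b"
    by (metis mult.assoc mult_1)
  then show ?thesis
    by (simp add: algebra_simps)
qed

lemma first_crossing_time:
  fixes f :: "'i \<Rightarrow> real \<Rightarrow> real"
  assumes "finite I" and "a \<le> b"
    and cont: "\<And>i. i \<in> I \<Longrightarrow> continuous_on {a..b} (f i)"
    and below_a: "\<And>i. i \<in> I \<Longrightarrow> f i a < c"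
    and "j \<in> I" and "c \<le> f j b"
  obtains T i0 where "i0 \<in> I" "a < T" "T \<le> b" "c \<le> f i0 T"
    and "\<And>i s. i \<in> I \<Longrightarrow> a \<le> s \<Longrightarrow> s < T \<Longrightarrow> f i s < c"
proof -
  define A where "A = {t \<in> {a..b}. \<exists>i\<in>I. c \<le> f i t}"
  have "A = (\<Union>i\<in>I. {t \<in> {a..b}. (\<lambda>_. c) t \<le> f i t})"
    unfolding A_def by auto
  also have "closed \<dots>"
    using assms by (intro closed_UN ballI continuous_on_closed_Collect_le continuous_on_const) auto
  finally have "closed A" .
  moreover have "b \<in> A" and bdd: "bdd_below A"
    using assms unfolding A_def by (auto intro!: bdd_belowI[of _ a])
  ultimately have "Inf A \<in> A"
    using closed_contains_Inf by blast
  then obtain i0 where i0: "i0 \<in> I" "c \<le> f i0 (Inf A)" "a \<le> Inf A" "Inf A \<le> b"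
    unfolding A_def by auto
  have "a \<noteq> Inf A"
    using i0 below_a by force
  moreover have "f i s < c" if "i \<in> I" "a \<le> s" "s < Inf A" for i s
    using that cInf_lower[OF _ bdd, of s] i0 unfolding A_def by force
  ultimately show ?thesis
    using that i0 by force
qed

lemma has_real_derivative_inner_left:
  fixes f :: "real \<Rightarrow> 'a::real_inner"
  assumes "(f has_vector_derivative f') (at t)"
  shows "((\<lambda>t. inner (f t) v) has_real_derivative inner f' v) (at t)"
proof -
  have "((\<lambda>t. inner (f t) v) has_derivative (\<lambda>h. inner (h *\<^sub>R f') v)) (at t)"
    using assms unfolding has_vector_derivative_def by (rule has_derivative_inner_left)
  then show ?thesis
    by (simp add: has_field_derivative_def mult.commute[of _ "inner f' v"])
qed

lemma psi_le_hk_K: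
  assumes "bounded (range (\<lambda>p. psi (fst p) (snd p)))"
  shows "psi a b \<le> hk_K psi"
proof -
  obtain B where "\<forall>y\<in>range (\<lambda>p. psi (fst p) (snd p)). norm y \<le> B"
    using assms unfolding bounded_iff by blast
  then have "bdd_above (range (\<lambda>p. \<bar>psi (fst p) (snd p)\<bar>))"
    by (auto intro!: bdd_aboveI[of _ B])
  then have "\<bar>psi (fst (a, b)) (snd (a, b))\<bar> \<le> hk_K psi"
    unfolding hk_K_def by (rule cSUP_upper[rotated]) simp
  then show ?thesis
    by simp
qed

lemma norm_diff_le_hk_diam:
  assumes "i \<in> {1..N}" "j \<in> {1..N}"
  shows "norm (x i t - x j t) \<le> hk_diam N x t"
proof -
  have "finite {norm (x i t - x j t) | i j. i \<in> {1..N} \<and> j \<in> {1..N}}"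
    by (rule finite_image_set2) auto
  then show ?thesis
    unfolding hk_diam_def using assms by (intro Max_ge) auto
qed

locale delayed_hk =
  fixes N :: nat and taubar :: real and tau :: "real \<Rightarrow> real"
    and psi :: "'a::real_inner \<Rightarrow> 'a \<Rightarrow> real" and K :: real
    and x0 x :: "nat \<Rightarrow> real \<Rightarrow> 'a"
  assumes N_ge_2: "N \<ge> 2"
    and taubar_pos: "taubar > 0"
    and tau_range: "\<And>t. t \<ge> 0 \<Longrightarrow> 0 \<le> tau t \<and> tau t \<le> taubar"
    and psi_nonneg: "\<And>a b. 0 \<le> psi a b"
    and psi_le: "\<And>a b. psi a b \<le> K"
    and solution: "hk_solution N taubar tau psi x0 x"
begin

definition field :: "nat \<Rightarrow> real \<Rightarrow> 'a" where
  "field k t = (1 / (real N - 1)) *\<^sub>R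
     (\<Sum>j\<in>{1..N}-{k}. psi (x k t) (x j (t - tau t)) *\<^sub>R (x j (t - tau t) - x k t))"

lemma K_nonneg: "0 \<le> K"
  using psi_nonneg psi_le order_trans by blast

lemma continuous_on_agent: "k \<in> {1..N} \<Longrightarrow> continuous_on {-taubar..} (x k)"
  using solution unfolding hk_solution_def by blast

lemma continuous_on_inner_agent:
  "k \<in> {1..N} \<Longrightarrow> S \<subseteq> {-taubar..} \<Longrightarrow> continuous_on S (\<lambda>t. inner (x k t) v)"
  by (intro continuous_intros continuous_on_subset[OF continuous_on_agent])

lemma has_real_derivative_inner_agent:
  assumes "k \<in> {1..N}" "t > 0"
  shows "((\<lambda>t. inner (x k t) v) has_real_derivative inner (field k t) v) (at t)"
  using solution assms unfolding hk_solution_def field_def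
  by (intro has_real_derivative_inner_left) blast

lemma inner_field_le:
  assumes k: "k \<in> {1..N}"
    and delayed: "\<And>j. j \<in> {1..N} \<Longrightarrow> inner (x j (t - tau t)) v \<le> c"
    and current: "inner (x k t) v \<le> c"
  shows "inner (field k t) v \<le> K * (c - inner (x k t) v)"
proof -
  have N1: "real N - 1 > 0"
    using N_ge_2 by simp
  have "inner (field k t) v = (1 / (real N - 1)) * (\<Sum>j\<in>{1..N}-{k}.
      psi (x k t) (x j (t - tau t)) * (inner (x j (t - tau t)) v - inner (x k t) v))"
    unfolding field_def by (simp add: inner_sum_left inner_diff_left)
  also have "\<dots> \<le> (1 / (real N - 1)) * (\<Sum>j\<in>{1..N}-{k}. K * (c - inner (x k t) v))"
  proof (intro mult_left_mono sum_mono)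
    fix j assume "j \<in> {1..N} - {k}"
    then have "psi (x k t) (x j (t - tau t)) * (inner (x j (t - tau t)) v - inner (x k t) v)
        \<le> psi (x k t) (x j (t - tau t)) * (c - inner (x k t) v)"
      using delayed psi_nonneg by (intro mult_left_mono) auto
    also have "\<dots> \<le> K * (c - inner (x k t) v)"
      using psi_le current by (intro mult_right_mono) auto
    finally show "psi (x k t) (x j (t - tau t)) * (inner (x j (t - tau t)) v - inner (x k t) v)
        \<le> K * (c - inner (x k t) v)" .
  qed (use N1 in simp)
  also have "\<dots> = K * (c - inner (x k t) v)"
    using k N1 by (simp add: of_nat_diff)
  finally show ?thesis .
qed

lemma inner_agent_le_invariant:
  assumes "0 \<le> a"
    and window: "\<And>k s. k \<in> {1..N} \<Longrightarrow> s \<in> {a - taubar..a} \<Longrightarrow> inner (x k s) v \<le> M"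
    and "k \<in> {1..N}" "a - taubar \<le> t1"
  shows "inner (x k t1) v \<le> M"
proof (rule ccontr)
  assume above: "\<not> inner (x k t1) v \<le> M"
  define c where "c = (M + inner (x k t1) v) / 2"
  have "M < c" "c < inner (x k t1) v"
    using above unfolding c_def by auto
  have "a < t1"
  proof (rule ccontr)
    assume "\<not> a < t1"
    then have "t1 \<in> {a - taubar..a}"
      using assms(4) by auto
    then show False
      using window[OF assms(3)] above by auto
  qed
  have cont: "continuous_on {a..t1} (\<lambda>t. inner (x j t) v)" if "j \<in> {1..N}" for j
    using that \<open>0 \<le> a\<close> taubar_pos by (intro continuous_on_inner_agent) auto
  have "a \<in> {a - taubar..a}"
    using taubar_pos by simp
  then have start_below: "inner (x j a) v < c" if "j \<in> {1..N}" for j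
    using window[OF that] \<open>M < c\<close> by fastforce
  obtain T j0 where j0: "j0 \<in> {1..N}" "a < T" "T \<le> t1" "c \<le> inner (x j0 T) v"
    and crossing: "\<And>j s. j \<in> {1..N} \<Longrightarrow> a \<le> s \<Longrightarrow> s < T \<Longrightarrow> inner (x j s) v < c"
    by (rule first_crossing_time[of "{1..N}" a t1 "\<lambda>j t. inner (x j t) v" c k])
      (use cont start_below \<open>a < t1\<close> \<open>c < inner (x k t1) v\<close> assms(3) in auto)
  have below: "inner (x j s) v \<le> c" if "j \<in> {1..N}" "a - taubar \<le> s" "s < T" for j s
    using window[of j s] crossing[of j s] that \<open>M < c\<close> by (cases "s \<le> a") auto
  have "exp (K * a) * (c - inner (x j0 a) v) \<le> exp (K * T) * (c - inner (x j0 T) v)"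
  proof (rule exp_scaled_gap_mono[where y' = "\<lambda>t. inner (field j0 t) v"])
    show "continuous_on {a..T} (\<lambda>t. inner (x j0 t) v)"
      using j0 \<open>0 \<le> a\<close> taubar_pos by (intro continuous_on_inner_agent) auto
  next
    fix t assume t: "a < t" "t < T"
    then show "((\<lambda>t. inner (x j0 t) v) has_real_derivative inner (field j0 t) v) (at t)"
      using has_real_derivative_inner_agent j0 \<open>0 \<le> a\<close> by auto
    have "0 \<le> tau t" "tau t \<le> taubar"
      using tau_range[of t] t \<open>0 \<le> a\<close> by auto
    then show "inner (field j0 t) v \<le> K * (c - inner (x j0 t) v)"
      using t j0 taubar_pos by (intro inner_field_le below) auto
  qed (use j0 in simp)
  also have "\<dots> \<le> 0"
    using j0 by (intro mult_nonneg_nonpos) auto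
  finally have "exp (K * a) * (c - inner (x j0 a) v) \<le> 0" .
  moreover have "0 < exp (K * a) * (c - inner (x j0 a) v)"
    using start_below[OF j0(1)] by simp
  ultimately show False
    by linarith
qed

lemma inner_agent_relaxation:
  assumes "0 \<le> a"
    and window: "\<And>k s. k \<in> {1..N} \<Longrightarrow> s \<in> {a - taubar..a} \<Longrightarrow> inner (x k s) v \<le> M"
    and k: "k \<in> {1..N}" and "a \<le> t0" "t0 \<le> t"
  shows "inner (x k t) v \<le> exp (- K * (t - t0)) * inner (x k t0) v
           + (1 - exp (- K * (t - t0))) * M"
proof (rule linear_relaxation_bound[where y' = "\<lambda>t. inner (field k t) v"])
  show "continuous_on {t0..t} (\<lambda>t. inner (x k t) v)"
    using k assms taubar_pos by (intro continuous_on_inner_agent) auto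
next
  fix s assume s: "t0 < s" "s < t"
  then show "((\<lambda>t. inner (x k t) v) has_real_derivative inner (field k s) v) (at s)"
    using has_real_derivative_inner_agent k assms by auto
  have "0 \<le> tau s" "tau s \<le> taubar"
    using tau_range[of s] s assms by auto
  then show "inner (field k s) v \<le> K * (M - inner (x k s) v)"
    using s assms taubar_pos
    by (intro inner_field_le inner_agent_le_invariant[OF \<open>0 \<le> a\<close> window]) auto
qed (use assms in auto)

lemma norm_diff_le_hk_D:
  assumes "i \<in> {1..N}" "j \<in> {1..N}"
    and "s \<in> {real n * taubar - taubar .. real n * taubar}"
    and "t \<in> {real n * taubar - taubar .. real n * taubar}"
  shows "norm (x i s - x j t) \<le> hk_D N taubar x n"
proof -
  define I where "I = {real n * taubar - taubar .. real n * taubar}"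
  have "compact (\<Union>k\<in>{1..N}. x k ` I)"
    unfolding I_def using taubar_pos
    by (intro compact_UN finite_atLeastAtMost compact_continuous_image
        continuous_on_subset[OF continuous_on_agent]) auto
  then obtain B where B: "\<And>y. y \<in> (\<Union>k\<in>{1..N}. x k ` I) \<Longrightarrow> norm y \<le> B"
    using compact_imp_bounded bounded_iff by metis
  have "norm (x i s - x j t) \<le> 2 * B"
    if "i \<in> {1..N}" "j \<in> {1..N}" "s \<in> I" "t \<in> I" for i j s t
  proof -
    have "norm (x i s) \<le> B" "norm (x j t) \<le> B"
      using B that by blast+
    then show ?thesis
      using norm_triangle_ineq4[of "x i s" "x j t"] by linarith
  qed
  then have "bdd_above {norm (x i s - x j t) | i j s t.
      i \<in> {1..N} \<and> j \<in> {1..N} \<and> s \<in> I \<and> t \<in> I}"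
    by (intro bdd_aboveI[of _ "2 * B"]) blast
  then show ?thesis
    unfolding hk_D_def I_def[symmetric] using assms unfolding I_def
    by (intro cSup_upper) auto
qed

lemma inner_window_level:
  assumes "norm v = 1"
  obtains M where
    "\<And>k s. k \<in> {1..N} \<Longrightarrow> s \<in> {real n * taubar - taubar .. real n * taubar}
       \<Longrightarrow> inner (x k s) v \<le> M"
    "\<And>k s. k \<in> {1..N} \<Longrightarrow> s \<in> {real n * taubar - taubar .. real n * taubar}
       \<Longrightarrow> inner (x k s) (- v) \<le> hk_D N taubar x n - M"
proof -
  define I where "I = {real n * taubar - taubar .. real n * taubar}"
  define U where "U = {inner (x k s) v | k s. k \<in> {1..N} \<and> s \<in> I}"
  have spread: "inner (x l s') v \<le> inner (x k s) v + hk_D N taubar x n"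
    if "l \<in> {1..N}" "k \<in> {1..N}" "s' \<in> I" "s \<in> I" for l k s s'
  proof -
    have "inner (x l s' - x k s) v \<le> norm (x l s' - x k s) * norm v"
      by (rule norm_cauchy_schwarz)
    also have "\<dots> \<le> hk_D N taubar x n"
      using norm_diff_le_hk_D that assms unfolding I_def by simp
    finally show ?thesis
      by (simp add: inner_diff_left)
  qed
  have first: "1 \<in> {1..N}" and right_end: "real n * taubar \<in> I"
    using N_ge_2 taubar_pos unfolding I_def by auto
  have "U \<noteq> {}"
    unfolding U_def using first right_end by blast
  have "bdd_above U"
    unfolding U_def using spread[OF _ first _ right_end]
    by (intro bdd_aboveI[of _ "inner (x 1 (real n * taubar)) v + hk_D N taubar x n"]) blast
  have "inner (x k s) v \<le> Sup U" if "k \<in> {1..N}" "s \<in> I" for k s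
    using that \<open>bdd_above U\<close> unfolding U_def by (intro cSup_upper) auto
  moreover have "inner (x k s) (- v) \<le> hk_D N taubar x n - Sup U"
    if "k \<in> {1..N}" "s \<in> I" for k s
  proof -
    have "Sup U \<le> inner (x k s) v + hk_D N taubar x n"
      using \<open>U \<noteq> {}\<close> by (rule cSup_least) (use spread[OF _ that(1) _ that(2)] in \<open>auto simp: U_def\<close>)
    then show ?thesis
      by simp
  qed
  ultimately show ?thesis
    unfolding I_def by (intro that[of "Sup U"]) auto
qed

text \<open>Any weight e below both exponentials may be used because, by invariance, the gaps to the
  levels at \<open>t0\<close> are nonnegative; this allows the two times s and t to differ.\<close>

lemma inner_diff_le:
  assumes v: "norm v = 1" and ij: "i \<in> {1..N}" "j \<in> {1..N}"
    and t0: "real n * taubar \<le> t0" and "t0 \<le> s" "t0 \<le> t"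
    and e_s: "e \<le> exp (- K * (s - t0))" and e_t: "e \<le> exp (- K * (t - t0))"
  shows "inner (x i s - x j t) v
           \<le> e * inner (x i t0 - x j t0) v + (1 - e) * hk_D N taubar x n"
proof -
  define D where "D = hk_D N taubar x n"
  define a where "a = real n * taubar"
  obtain M where up: "\<And>k s. k \<in> {1..N} \<Longrightarrow> s \<in> {a - taubar..a} \<Longrightarrow> inner (x k s) v \<le> M"
    and down: "\<And>k s. k \<in> {1..N} \<Longrightarrow> s \<in> {a - taubar..a} \<Longrightarrow> inner (x k s) (- v) \<le> D - M"
    using inner_window_level[OF v] unfolding a_def D_def by blast
  have "0 \<le> a" "a \<le> t0" "a - taubar \<le> t0"
    using t0 taubar_pos unfolding a_def by auto
  have Xi: "inner (x i t0) v \<le> M" and Xj: "inner (x j t0) (- v) \<le> D - M"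
    using inner_agent_le_invariant[OF \<open>0 \<le> a\<close>] up down ij \<open>a - taubar \<le> t0\<close> by blast+
  have "inner (x i s) v \<le> exp (- K * (s - t0)) * inner (x i t0) v + (1 - exp (- K * (s - t0))) * M"
    using inner_agent_relaxation[OF \<open>0 \<le> a\<close> up ij(1) \<open>a \<le> t0\<close> \<open>t0 \<le> s\<close>] .
  also have "\<dots> = M - exp (- K * (s - t0)) * (M - inner (x i t0) v)"
    by (simp add: algebra_simps)
  also have "\<dots> \<le> M - e * (M - inner (x i t0) v)"
    using e_s Xi by (intro diff_left_mono mult_right_mono) auto
  finally have i_bound: "inner (x i s) v \<le> M - e * (M - inner (x i t0) v)" .
  have "inner (x j t) (- v) \<le> exp (- K * (t - t0)) * inner (x j t0) (- v)
      + (1 - exp (- K * (t - t0))) * (D - M)"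
    using inner_agent_relaxation[OF \<open>0 \<le> a\<close> down ij(2) \<open>a \<le> t0\<close> \<open>t0 \<le> t\<close>] .
  also have "\<dots> = (D - M) - exp (- K * (t - t0)) * ((D - M) - inner (x j t0) (- v))"
    by (simp add: algebra_simps)
  also have "\<dots> \<le> (D - M) - e * ((D - M) - inner (x j t0) (- v))"
    using e_t Xj by (intro diff_left_mono mult_right_mono) auto
  finally have j_bound: "inner (x j t) (- v) \<le> (D - M) - e * ((D - M) - inner (x j t0) (- v))" .
  show ?thesis
    using i_bound j_bound unfolding D_def by (simp add: inner_diff_left algebra_simps)
qed

lemma hk_D_Suc_le:
  "hk_D N taubar x (Suc n) \<le> exp (- K * taubar) * hk_diam N x (real n * taubar)
     + (1 - exp (- K * taubar)) * hk_D N taubar x n"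
  (is "_ \<le> ?R")
proof -
  define a where "a = real n * taubar"
  define e where "e = exp (- K * taubar)"
  have e01: "0 \<le> e" "e \<le> 1"
    unfolding e_def using K_nonneg taubar_pos by auto
  have first: "1 \<in> {1..N}" and "a \<in> {a - taubar..a}"
    using N_ge_2 taubar_pos by auto
  have "0 \<le> ?R"
    using norm_diff_le_hk_diam[OF first first, of x a] e01
      norm_diff_le_hk_D[OF first first, of a n a] \<open>a \<in> _\<close>
    unfolding a_def e_def by (intro add_nonneg_nonneg mult_nonneg_nonneg) auto
  have next_window: "{real (Suc n) * taubar - taubar .. real (Suc n) * taubar} = {a .. a + taubar}"
    unfolding a_def by (simp add: algebra_simps)
  have "norm (x i s - x j t) \<le> ?R"
    if ij: "i \<in> {1..N}" "j \<in> {1..N}" and st: "s \<in> {a..a + taubar}" "t \<in> {a..a + taubar}"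
    for i j s t
  proof (cases "x i s = x j t")
    case False
    define v where "v = (x i s - x j t) /\<^sub>R norm (x i s - x j t)"
    have "x i s - x j t \<noteq> 0"
      using False by simp
    then have "norm v = 1"
      unfolding v_def by simp
    have "norm (x i s - x j t) = inner (x i s - x j t) v"
      using \<open>x i s - x j t \<noteq> 0\<close> unfolding v_def
      by (simp add: power2_norm_eq_inner[symmetric] power2_eq_square)
    also have "\<dots> \<le> e * inner (x i a - x j a) v + (1 - e) * hk_D N taubar x n"
      using st K_nonneg unfolding e_def a_def
      by (intro inner_diff_le[OF \<open>norm v = 1\<close> ij]) (auto simp: mult_left_mono)
    also have "\<dots> \<le> e * hk_diam N x a + (1 - e) * hk_D N taubar x n"
      using norm_cauchy_schwarz[of "x i a - x j a" v] norm_diff_le_hk_diam[OF ij, of x a]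
        \<open>norm v = 1\<close> e01
      by (intro add_right_mono mult_left_mono) auto
    finally show ?thesis
      unfolding a_def e_def .
  qed (use \<open>0 \<le> ?R\<close> in simp)
  then show ?thesis
    unfolding hk_D_def[of N taubar x "Suc n"] next_window
    using first taubar_pos by (intro cSup_least) fastforce+
qed

end

text \<open>Continuity of \<open>\<tau>\<close>, \<open>\<psi>\<close> and the initial data is needed only for existence of
  solutions; the estimates use just the bounds \<open>0 \<le> \<psi> \<le> K\<close> and \<open>0 \<le> \<tau> \<le> taubar\<close>.\<close>

theorem lemma2p4:
  fixes N :: nat and taubar :: real and tau :: "real \<Rightarrow> real"
    and psi :: "'a::euclidean_space \<Rightarrow> 'a \<Rightarrow> real"
    and x0 x :: "nat \<Rightarrow> real \<Rightarrow> 'a"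
  assumes N2: "N \<ge> 2"
    and taubar_pos: "taubar > 0"
    and tau_cont: "continuous_on {0..} tau"
    and tau_range: "\<And>t. t \<ge> 0 \<Longrightarrow> 0 \<le> tau t \<and> tau t \<le> taubar"
    and psi_cont: "continuous_on UNIV (\<lambda>p. psi (fst p) (snd p))"
    and psi_bdd: "bounded (range (\<lambda>p. psi (fst p) (snd p)))"
    and psi_pos: "\<And>a b. psi a b > 0"
    and x0_cont: "\<And>i. i \<in> {1..N} \<Longrightarrow> continuous_on {-taubar..0} (x0 i)"
    and sol: "hk_solution N taubar tau psi x0 x"
  shows "(\<forall>i\<in>{1..N}. \<forall>j\<in>{1..N}. \<forall>v::'a. \<forall>n::nat. \<forall>t0 t.
            norm v = 1 \<and> real n * taubar \<le> t0 \<and> t0 \<le> t \<longrightarrow>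
            inner (x i t - x j t) v
              \<le> exp (- hk_K psi * (t - t0)) * inner (x i t0 - x j t0) v
                 + (1 - exp (- hk_K psi * (t - t0))) * hk_D N taubar x n)
       \<and> (\<forall>n::nat. hk_D N taubar x (Suc n)
            \<le> exp (- hk_K psi * taubar) * hk_diam N x (real n * taubar)
               + (1 - exp (- hk_K psi * taubar)) * hk_D N taubar x n)"
proof -
  interpret delayed_hk N taubar tau psi "hk_K psi" x0 x
    using N2 taubar_pos tau_range psi_pos psi_le_hk_K[OF psi_bdd] sol
    by unfold_locales (auto intro: less_imp_le)
  show ?thesis
    using inner_diff_le[where s = t and t = t and e = "exp (- hk_K psi * (t - t0))" for t t0]
      hk_D_Suc_le by auto
qed

end
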